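(* Let $(\mathcal S,\mathcal A,P,r)$ be any finite MDP (general/multichain) and $(g^\star,h^\star)$ a solution of the modified Bellman equations. Let $V^0\in\mathbb R^n$, let $\lambda_{k+1}\le\lambda_k<1$ for $k\ge1$ with $\lim_k\lambda_k=0$, set $\lambda_0=1$, let $V^k=\lambda_kV^0+(1-\lambda_k)TV^{k-1}$ for $k\ge1$, and let $\pi_k$ be greedy policies, $T^{\pi_k}V^k=TV^k$. Then there exists an integer $K\ge0$ such that $\mathcal P^{\pi_k}g^\star=g^\star$ for all $k\ge K$; taking $K$ to be the minimal such integer, for every $k>K$, \[\|g^\star-g^{\pi_k}\|_\infty\le\|TV^k-V^k-g^\star\|_\infty\le2\Big(1-\sum_{i=1}^k\lambda_i\prod_{j=i}^k(1-\lambda_j)\Big)\|V^0-h^\star\|_\infty+2\prod_{j=K}^k(1-\lambda_j)\,\|g^\star\|_\infty.\]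
   Context: An MDP $(\mathcal S,\mathcal A,P,r)$ has finite state space $\mathcal S$ ($|\mathcal S|=n$, functions identified with $\mathbb R^n$), finite action space, transition probabilities $P(s'\mid s,a)$ and bounded reward $r$. For a policy $\pi$: $r^\pi(s)=\sum_a\pi(a\mid s)r(s,a)$, $\mathcal P^\pi(s,s')=\sum_a\pi(a\mid s)P(s'\mid s,a)$, $g^\pi(s)=\liminf_{T\to\infty}\frac1T\mathbb E_\pi[\sum_{t=0}^{T-1}r(s_t,a_t)\mid s_0=s]$, $g^\star=\max_\pi g^\pi$. $T^\pi V=r^\pi+\mathcal P^\pi V$, $(TV)(s)=\max_a\{r(s,a)+\sum_{s'}P(s'\mid s,a)V(s')\}$. A pair $(g,h)$ solves the modified Bellman equations if $\max_a\sum_{s'}P(s'\mid s,a)g(s')=g(s)$ and $\max_a\{r(s,a)+\sum_{s'}P(s'\mid s,a)h(s')\}=h(s)+g(s)$ for all $s$, with some policy attaining both maxima simultaneously; the first component of any solution equals $g^\star$. The convention $\lambda_0=1$ is the paper's. *)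

theory Defs
  imports "HOL-Analysis.Analysis"
begin

definition is_mdp :: "('s::finite \<Rightarrow> 'a::finite \<Rightarrow> 's \<Rightarrow> real) \<Rightarrow> bool" where
  "is_mdp P \<longleftrightarrow> (\<forall>s a s'. 0 \<le> P s a s') \<and> (\<forall>s a. (\<Sum>s'\<in>UNIV. P s a s') = 1)"

text \<open>Stationary (possibly randomized) Markov policies pol s a = pol(a|s).\<close>
definition is_policy :: "('s::finite \<Rightarrow> 'a::finite \<Rightarrow> real) \<Rightarrow> bool" where
  "is_policy pol \<longleftrightarrow> (\<forall>s a. 0 \<le> pol s a) \<and> (\<forall>s. (\<Sum>a\<in>UNIV. pol s a) = 1)"

definition r_pi :: "('s::finite \<Rightarrow> 'a::finite \<Rightarrow> real) \<Rightarrow> ('s \<Rightarrow> 'a \<Rightarrow> real) \<Rightarrow> 's \<Rightarrow> real" where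
  "r_pi r pol s = (\<Sum>a\<in>UNIV. pol s a * r s a)"

definition P_pi :: "('s::finite \<Rightarrow> 'a::finite \<Rightarrow> 's \<Rightarrow> real) \<Rightarrow> ('s \<Rightarrow> 'a \<Rightarrow> real) \<Rightarrow> ('s \<Rightarrow> real) \<Rightarrow> 's \<Rightarrow> real" where
  "P_pi P pol V s = (\<Sum>s'\<in>UNIV. (\<Sum>a\<in>UNIV. pol s a * P s a s') * V s')"

definition T_pi :: "('s::finite \<Rightarrow> 'a::finite \<Rightarrow> 's \<Rightarrow> real) \<Rightarrow> ('s \<Rightarrow> 'a \<Rightarrow> real) \<Rightarrow> ('s \<Rightarrow> 'a \<Rightarrow> real) \<Rightarrow> ('s \<Rightarrow> real) \<Rightarrow> 's \<Rightarrow> real" where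
  "T_pi P r pol V s = r_pi r pol s + P_pi P pol V s"

definition T_opt :: "('s::finite \<Rightarrow> 'a::finite \<Rightarrow> 's \<Rightarrow> real) \<Rightarrow> ('s \<Rightarrow> 'a \<Rightarrow> real) \<Rightarrow> ('s \<Rightarrow> real) \<Rightarrow> 's \<Rightarrow> real" where
  "T_opt P r V s = (MAX a\<in>UNIV. r s a + (\<Sum>s'\<in>UNIV. P s a s' * V s'))"

text \<open>Gain of a stationary policy: for a stationary Markov policy,
  E_pi[r(s_t,a_t) | s_0 = s] = ((P^pol)^t r^pol)(s), so
  g^pol(s) = liminf_T (1/T) sum_{t<T} ((P^pol)^t r^pol)(s).\<close>
definition gain :: "('s::finite \<Rightarrow> 'a::finite \<Rightarrow> 's \<Rightarrow> real) \<Rightarrow> ('s \<Rightarrow> 'a \<Rightarrow> real) \<Rightarrow> ('s \<Rightarrow> 'a \<Rightarrow> real) \<Rightarrow> 's \<Rightarrow> real" where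
  "gain P r pol s = real_of_ereal (liminf (\<lambda>T::nat. ereal
      ((1 / real T) * (\<Sum>t<T. ((P_pi P pol ^^ t) (r_pi r pol)) s))))"

definition modified_bellman :: "('s::finite \<Rightarrow> 'a::finite \<Rightarrow> 's \<Rightarrow> real) \<Rightarrow> ('s \<Rightarrow> 'a \<Rightarrow> real) \<Rightarrow> ('s \<Rightarrow> real) \<Rightarrow> ('s \<Rightarrow> real) \<Rightarrow> bool" where
  "modified_bellman P r g h \<longleftrightarrow>
     (\<forall>s. (MAX a\<in>UNIV. (\<Sum>s'\<in>UNIV. P s a s' * g s')) = g s) \<and>
     (\<forall>s. (MAX a\<in>UNIV. r s a + (\<Sum>s'\<in>UNIV. P s a s' * h s')) = h s + g s) \<and>
     (\<exists>d::'s \<Rightarrow> 'a. \<forall>s. (\<Sum>s'\<in>UNIV. P s (d s) s' * g s') = g s \<and>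
                      r s (d s) + (\<Sum>s'\<in>UNIV. P s (d s) s' * h s') = h s + g s)"

definition supnorm :: "('s::finite \<Rightarrow> real) \<Rightarrow> real" where
  "supnorm v = (MAX s\<in>UNIV. \<bar>v s\<bar>)"

end

theory Submission
  imports Defs
begin

(* Write V k = h + A k * g + e k. Since T (h + c g) = h + (c + 1) g for c >= 0 and T is
   non-expansive, the anchored recursion keeps |e k| <= |V0 - h|, while A k grows without bound
   because lam k tends to 0. Once A k exceeds 2 |V0 - h| divided by the smallest positive gap
   g s - P_a g s, a greedy policy gives no mass to actions with P_a g < g, i.e. it fixes g.
   For the rate, the increments V (k+1) - V k - (A (k+1) - A k) g obey a linear recursion in
   which the greedy policies enter only through averaging operators; propagating upper and lower
   bounds through it yields the coefficient 1 - sum lam i prod (1 - lam j), and the steps before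
   the policies fix g contribute the term prod (1 - lam j) |g|. Finally, for a policy fixing g,
   the Cesaro averages of its rewards differ from g by at most |T^pi V - V - g|. *)

definition q_value ::
    "('s::finite \<Rightarrow> 'a::finite \<Rightarrow> 's \<Rightarrow> real) \<Rightarrow> ('s \<Rightarrow> 'a \<Rightarrow> real) \<Rightarrow> ('s \<Rightarrow> real) \<Rightarrow> 's \<Rightarrow> 'a \<Rightarrow> real"
  where "q_value P r V s a = r s a + (\<Sum>s'\<in>UNIV. P s a s' * V s')"

lemma T_opt_eq_Max_q_value: "T_opt P r V s = (MAX a\<in>UNIV. q_value P r V s a)"
  unfolding T_opt_def q_value_def ..

lemma q_value_le_T_opt: "q_value P r V s a \<le> T_opt P r V s"
  unfolding T_opt_eq_Max_q_value by simp

lemma P_pi_eq_sum_actions: "P_pi P pol V s = (\<Sum>a\<in>UNIV. pol s a * (\<Sum>s'\<in>UNIV. P s a s' * V s'))"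
  unfolding P_pi_def sum_distrib_right sum_distrib_left
  by (subst sum.swap) (simp add: mult.assoc)

lemma T_pi_eq_sum_q_value: "T_pi P r pol V s = (\<Sum>a\<in>UNIV. pol s a * q_value P r V s a)"
  unfolding T_pi_def r_pi_def P_pi_eq_sum_actions q_value_def
  by (simp add: distrib_left sum.distrib)

lemma P_pi_add: "P_pi P pol (\<lambda>x. V x + W x) = (\<lambda>s. P_pi P pol V s + P_pi P pol W s)"
  unfolding P_pi_def by (simp add: algebra_simps sum.distrib)

lemma P_pi_diff: "P_pi P pol (\<lambda>x. V x - W x) = (\<lambda>s. P_pi P pol V s - P_pi P pol W s)"
  unfolding P_pi_def by (simp add: algebra_simps sum_subtractf)

lemma P_pi_diff_scale: "P_pi P pol (\<lambda>x. V x - c * W x) s = P_pi P pol V s - c * P_pi P pol W s"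
  unfolding P_pi_def by (simp add: algebra_simps sum_subtractf sum_distrib_left)

lemma T_pi_diff: "T_pi P r pol V s - T_pi P r pol W s = P_pi P pol (\<lambda>x. V x - W x) s"
  unfolding T_pi_def P_pi_diff by simp

lemma weighted_avg_le:
  fixes w f :: "'b::finite \<Rightarrow> real"
  assumes "\<And>x. 0 \<le> w x" "sum w UNIV = 1" "\<And>x. f x \<le> u"
  shows "(\<Sum>x\<in>UNIV. w x * f x) \<le> u"
proof -
  have "(\<Sum>x\<in>UNIV. w x * f x) \<le> (\<Sum>x\<in>UNIV. w x * u)"
    using assms by (intro sum_mono mult_left_mono) auto
  also have "\<dots> = u"
    using assms(2) by (simp add: sum_distrib_right[symmetric])
  finally show ?thesis .
qed

lemma weighted_avg_ge:
  fixes w f :: "'b::finite \<Rightarrow> real"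
  assumes "\<And>x. 0 \<le> w x" "sum w UNIV = 1" "\<And>x. u \<le> f x"
  shows "u \<le> (\<Sum>x\<in>UNIV. w x * f x)"
  using weighted_avg_le[of w "\<lambda>x. - f x" "- u"] assms by (simp add: sum_negf)

lemma abs_convex_bound_le:
  fixes x y u a :: real
  assumes "\<bar>x\<bar> \<le> a" "\<bar>y\<bar> \<le> a" "0 \<le> u" "u \<le> 1"
  shows "\<bar>u * x + (1 - u) * y\<bar> \<le> a"
  using convex_bound_le[of x a y u "1 - u"] convex_bound_le[of "- x" a "- y" u "1 - u"] assms
  by (auto simp: abs_le_iff)

lemma mdp_avg_le: "is_mdp P \<Longrightarrow> (\<And>s'. V s' \<le> u) \<Longrightarrow> (\<Sum>s'\<in>UNIV. P s a s' * V s') \<le> u"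
  by (intro weighted_avg_le) (auto simp: is_mdp_def)

lemma mdp_avg_ge: "is_mdp P \<Longrightarrow> (\<And>s'. u \<le> V s') \<Longrightarrow> u \<le> (\<Sum>s'\<in>UNIV. P s a s' * V s')"
  by (intro weighted_avg_ge) (auto simp: is_mdp_def)

lemma P_pi_le:
  "is_mdp P \<Longrightarrow> is_policy pol \<Longrightarrow> (\<And>s'. V s' \<le> u) \<Longrightarrow> P_pi P pol V s \<le> u"
  unfolding P_pi_eq_sum_actions by (intro weighted_avg_le mdp_avg_le) (auto simp: is_policy_def)

lemma P_pi_ge:
  "is_mdp P \<Longrightarrow> is_policy pol \<Longrightarrow> (\<And>s'. u \<le> V s') \<Longrightarrow> u \<le> P_pi P pol V s"
  unfolding P_pi_eq_sum_actions by (intro weighted_avg_ge mdp_avg_ge) (auto simp: is_policy_def)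

lemma T_pi_le_T_opt: "is_policy pol \<Longrightarrow> T_pi P r pol V s \<le> T_opt P r V s"
  unfolding T_pi_eq_sum_q_value
  by (intro weighted_avg_le q_value_le_T_opt) (auto simp: is_policy_def)

lemma T_opt_diff_le_greedy:
  assumes "is_policy pol" "T_pi P r pol V = T_opt P r V"
  shows "T_opt P r V s - T_opt P r W s \<le> P_pi P pol (\<lambda>x. V x - W x) s"
  using T_pi_le_T_opt[OF assms(1), of P r W s] T_pi_diff[of P r pol V s W] assms(2) by simp

lemma greedy_le_T_opt_diff:
  assumes "is_policy pol" "T_pi P r pol W = T_opt P r W"
  shows "P_pi P pol (\<lambda>x. V x - W x) s \<le> T_opt P r V s - T_opt P r W s"
  using T_pi_le_T_opt[OF assms(1), of P r V s] T_pi_diff[of P r pol V s W] assms(2) by simp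

lemma T_opt_le_shift:
  assumes "is_mdp P" "\<And>x. V x - W x \<le> c"
  shows "T_opt P r V s \<le> T_opt P r W s + c"
proof -
  have "q_value P r V s a \<le> T_opt P r W s + c" for a
  proof -
    have "(\<Sum>s'\<in>UNIV. P s a s' * (V s' - W s')) \<le> c"
      using assms by (intro mdp_avg_le) auto
    then have "q_value P r V s a \<le> q_value P r W s a + c"
      unfolding q_value_def by (simp add: algebra_simps sum_subtractf)
    then show ?thesis
      using q_value_le_T_opt[of P r W s a] by linarith
  qed
  then show ?thesis
    unfolding T_opt_eq_Max_q_value[of P r V] by simp
qed

lemma T_opt_nonexpansive:
  assumes "is_mdp P" "\<And>x. \<bar>V x - W x\<bar> \<le> c"
  shows "\<bar>T_opt P r V s - T_opt P r W s\<bar> \<le> c"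
  using T_opt_le_shift[OF assms(1), of V W c r s] T_opt_le_shift[OF assms(1), of W V c r s] assms(2)
  by (fastforce simp: abs_le_iff)

lemma bellman_gain_le:
  assumes "modified_bellman P r g h"
  shows "(\<Sum>s'\<in>UNIV. P s a s' * g s') \<le> g s"
proof -
  have "(\<Sum>s'\<in>UNIV. P s a s' * g s') \<le> (MAX a\<in>UNIV. \<Sum>s'\<in>UNIV. P s a s' * g s')"
    by simp
  then show ?thesis
    using assms unfolding modified_bellman_def by metis
qed

lemma bellman_T_opt_bias: "modified_bellman P r g h \<Longrightarrow> T_opt P r h s = h s + g s"
  unfolding modified_bellman_def T_opt_def by blast

lemma bellman_decision_rule:
  assumes "modified_bellman P r g h"
  obtains d where "\<And>s. (\<Sum>s'\<in>UNIV. P s (d s) s' * g s') = g s"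
    and "\<And>s. q_value P r h s (d s) = h s + g s"
  using assms unfolding modified_bellman_def q_value_def by blast

lemma P_pi_gain_le: "modified_bellman P r g h \<Longrightarrow> is_policy pol \<Longrightarrow> P_pi P pol g s \<le> g s"
  unfolding P_pi_eq_sum_actions
  by (intro weighted_avg_le bellman_gain_le) (auto simp: is_policy_def)

lemma q_value_bias_plus_gain:
  "q_value P r (\<lambda>x. h x + c * g x) s a = q_value P r h s a + c * (\<Sum>s'\<in>UNIV. P s a s' * g s')"
  unfolding q_value_def by (simp add: algebra_simps sum.distrib sum_distrib_left)

lemma T_opt_bias_plus_gain:
  assumes bell: "modified_bellman P r g h" and "0 \<le> c"
  shows "T_opt P r (\<lambda>x. h x + c * g x) s = h s + (c + 1) * g s"
proof -
  obtain d where d: "\<And>s. (\<Sum>s'\<in>UNIV. P s (d s) s' * g s') = g s"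
      "\<And>s. q_value P r h s (d s) = h s + g s"
    using bellman_decision_rule[OF bell] by blast
  have "q_value P r (\<lambda>x. h x + c * g x) s a \<le> h s + (c + 1) * g s" for a
    using q_value_le_T_opt[of P r h s a] bellman_T_opt_bias[OF bell, of s]
      mult_left_mono[OF bellman_gain_le[OF bell, of s a] \<open>0 \<le> c\<close>]
    by (simp add: q_value_bias_plus_gain algebra_simps)
  then have "T_opt P r (\<lambda>x. h x + c * g x) s \<le> h s + (c + 1) * g s"
    unfolding T_opt_eq_Max_q_value by simp
  moreover have "h s + (c + 1) * g s \<le> T_opt P r (\<lambda>x. h x + c * g x) s"
    using q_value_le_T_opt[of P r "\<lambda>x. h x + c * g x" s "d s"] d
    by (simp add: q_value_bias_plus_gain algebra_simps)
  ultimately show ?thesis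
    by simp
qed

lemma T_opt_near_bias:
  assumes "is_mdp P" "modified_bellman P r g h" "0 \<le> c"
    and "\<And>x. \<bar>V x - (h x + c * g x)\<bar> \<le> R"
  shows "\<bar>T_opt P r V s - (h s + (c + 1) * g s)\<bar> \<le> R"
  using T_opt_nonexpansive[OF assms(1), of V "\<lambda>x. h x + c * g x" R r s] assms(4)
    T_opt_bias_plus_gain[OF assms(2,3)] by simp

lemma greedy_policy_support:
  assumes pol: "is_policy pol" and greedy: "T_pi P r pol V s = T_opt P r V s"
    and suboptimal: "q_value P r V s a < T_opt P r V s"
  shows "pol s a = 0"
proof -
  let ?loss = "\<lambda>b. pol s b * (T_opt P r V s - q_value P r V s b)"
  have "(\<Sum>b\<in>UNIV. ?loss b) = (\<Sum>b\<in>UNIV. pol s b) * T_opt P r V s - T_pi P r pol V s"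
    by (simp add: T_pi_eq_sum_q_value right_diff_distrib sum_subtractf sum_distrib_right)
  also have "\<dots> = 0"
    using pol greedy by (simp add: is_policy_def)
  finally have "?loss a = 0"
    using pol q_value_le_T_opt[of P r V s]
    by (subst (asm) sum_nonneg_eq_0_iff) (auto simp: is_policy_def)
  then show ?thesis
    using suboptimal by simp
qed

lemma greedy_policy_preserves_gain:
  assumes mdp: "is_mdp P" and bell: "modified_bellman P r g h"
    and pol: "is_policy pol" and greedy: "T_pi P r pol V = T_opt P r V"
    and near: "\<And>s. \<bar>V s - (h s + c * g s)\<bar> \<le> R"
    and gap: "\<And>s a. (\<Sum>s'\<in>UNIV. P s a s' * g s') < g s
                \<Longrightarrow> 2 * R < c * (g s - (\<Sum>s'\<in>UNIV. P s a s' * g s'))"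
  shows "P_pi P pol g = g"
proof
  fix s
  let ?Pg = "\<lambda>a. \<Sum>s'\<in>UNIV. P s a s' * g s'"
  define e where "e x = V x - (h x + c * g x)" for x
  obtain d where d: "\<And>s. (\<Sum>s'\<in>UNIV. P s (d s) s' * g s') = g s"
      "\<And>s. q_value P r h s (d s) = h s + g s"
    using bellman_decision_rule[OF bell] by blast
  have q_eq: "q_value P r V s a = q_value P r h s a + c * ?Pg a + (\<Sum>s'\<in>UNIV. P s a s' * e s')" for a
    unfolding q_value_def e_def by (simp add: algebra_simps sum.distrib sum_subtractf sum_distrib_left)
  have "- R \<le> e x" "e x \<le> R" for x
    using near[of x] by (simp_all add: e_def abs_le_iff)
  then have e_avg: "\<bar>\<Sum>s'\<in>UNIV. P s a s' * e s'\<bar> \<le> R" for a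
    using mdp_avg_le[OF mdp, of e R s a] mdp_avg_ge[OF mdp, of "- R" e s a] by (simp add: abs_le_iff)
  have "pol s a * ?Pg a = pol s a * g s" for a
  proof (cases "?Pg a < g s")
    case True
    have "2 * R < c * g s - c * ?Pg a"
      using gap[OF True] by (simp add: right_diff_distrib)
    moreover have "q_value P r V s (d s) = h s + g s + c * g s + (\<Sum>s'\<in>UNIV. P s (d s) s' * e s')"
      using q_eq[of "d s"] d[of s] by simp
    ultimately have "q_value P r V s a < q_value P r V s (d s)"
      using q_eq[of a] e_avg[of a] e_avg[of "d s"]
        q_value_le_T_opt[of P r h s a] bellman_T_opt_bias[OF bell, of s]
      by linarith
    then have suboptimal: "q_value P r V s a < T_opt P r V s"
      using q_value_le_T_opt[of P r V s "d s"] by linarith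
    have "pol s a = 0"
      using greedy_policy_support[OF pol _ suboptimal] greedy by simp
    then show ?thesis by simp
  next
    case False
    then show ?thesis using bellman_gain_le[OF bell, of s a] by simp
  qed
  then have "P_pi P pol g s = (\<Sum>a\<in>UNIV. pol s a * g s)"
    unfolding P_pi_eq_sum_actions by (rule sum.cong[OF refl])
  also have "\<dots> = g s"
    using pol by (simp add: is_policy_def sum_distrib_right[symmetric])
  finally show "P_pi P pol g s = g s" .
qed

lemma abs_le_supnorm: "\<bar>v s\<bar> \<le> supnorm v"
  unfolding supnorm_def by (rule Max_ge) auto

lemma supnorm_leI: "(\<And>s. \<bar>v s\<bar> \<le> c) \<Longrightarrow> supnorm v \<le> c"
  unfolding supnorm_def by (subst Max_le_iff) auto

lemma P_pi_iterate_add: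
  "(P_pi P pol ^^ t) (\<lambda>x. V x + W x) = (\<lambda>s. (P_pi P pol ^^ t) V s + (P_pi P pol ^^ t) W s)"
  by (induction t) (simp_all add: P_pi_add)

lemma P_pi_iterate_diff:
  "(P_pi P pol ^^ t) (\<lambda>x. V x - W x) = (\<lambda>s. (P_pi P pol ^^ t) V s - (P_pi P pol ^^ t) W s)"
  by (induction t) (simp_all add: P_pi_diff)

lemma P_pi_iterate_fixpoint: "P_pi P pol g = g \<Longrightarrow> (P_pi P pol ^^ t) g = g"
  by (induction t) simp_all

lemma P_pi_iterate_bounded:
  assumes "is_mdp P" "is_policy pol" "\<And>x. \<bar>V x\<bar> \<le> c"
  shows "\<bar>(P_pi P pol ^^ t) V s\<bar> \<le> c"
proof (induction t arbitrary: s)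
  case 0
  then show ?case using assms(3) by simp
next
  case (Suc t)
  have "(P_pi P pol ^^ t) V x \<le> c" "- c \<le> (P_pi P pol ^^ t) V x" for x
    using Suc.IH[of x] by (auto simp: abs_le_iff)
  then show ?case
    using P_pi_le[OF assms(1,2), of "(P_pi P pol ^^ t) V" c s]
      P_pi_ge[OF assms(1,2), of "- c" "(P_pi P pol ^^ t) V" s]
    by (simp add: abs_le_iff)
qed

lemma sum_P_pi_iterates_reward:
  assumes "P_pi P pol g = g"
  shows "(\<Sum>t<T. (P_pi P pol ^^ t) (r_pi r pol) s)
    = V s - (P_pi P pol ^^ T) V s + real T * g s
      + (\<Sum>t<T. (P_pi P pol ^^ t) (\<lambda>x. T_pi P r pol V x - V x - g x) s)"
proof -
  let ?M = "P_pi P pol"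
  have "r_pi r pol = (\<lambda>x. ((T_pi P r pol V x - V x - g x) + V x + g x) - ?M V x)"
    unfolding T_pi_def by (simp add: algebra_simps)
  then have "(?M ^^ t) (r_pi r pol) s
      = (?M ^^ t) (\<lambda>x. T_pi P r pol V x - V x - g x) s + ((?M ^^ t) V s - (?M ^^ Suc t) V s) + g s" for t
    using P_pi_iterate_fixpoint[OF assms, of t]
    by (simp add: P_pi_iterate_add P_pi_iterate_diff funpow_Suc_right del: funpow.simps)
  then have "(\<Sum>t<T. (?M ^^ t) (r_pi r pol) s)
      = (\<Sum>t<T. (?M ^^ t) (\<lambda>x. T_pi P r pol V x - V x - g x) s)
        + (\<Sum>t<T. (?M ^^ t) V s - (?M ^^ Suc t) V s) + (\<Sum>t<T. g s)"
    by (simp add: sum.distrib)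
  then show ?thesis
    by (simp only: sum_lessThan_telescope'[of "\<lambda>t. (?M ^^ t) V s"]) simp
qed

lemma abs_diff_real_liminf_le:
  fixes f :: "nat \<Rightarrow> real"
  assumes "\<And>e. 0 < e \<Longrightarrow> eventually (\<lambda>T. \<bar>f T - c\<bar> \<le> W + e) sequentially"
  shows "\<bar>c - real_of_ereal (liminf (\<lambda>T. ereal (f T)))\<bar> \<le> W"
proof -
  define L where "L = liminf (\<lambda>T. ereal (f T))"
  have lower: "ereal (c - W - e) \<le> L" and upper: "L \<le> ereal (c + W + e)" if "0 < e" for e
  proof -
    have close: "eventually (\<lambda>T. \<bar>f T - c\<bar> \<le> W + e) sequentially"
      using assms that by blast
    have "eventually (\<lambda>T. ereal (c - W - e) \<le> ereal (f T)) sequentially"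
      by (rule eventually_mono[OF close]) (simp add: abs_le_iff)
    then show "ereal (c - W - e) \<le> L"
      unfolding L_def by (rule Liminf_bounded)
    have "eventually (\<lambda>T. ereal (f T) \<le> ereal (c + W + e)) sequentially"
      by (rule eventually_mono[OF close]) (simp add: abs_le_iff)
    then have "limsup (\<lambda>T. ereal (f T)) \<le> ereal (c + W + e)"
      by (rule Limsup_bounded)
    moreover have "L \<le> limsup (\<lambda>T. ereal (f T))"
      unfolding L_def by (rule Liminf_le_Limsup) simp
    ultimately show "L \<le> ereal (c + W + e)"
      by (rule order_trans[rotated])
  qed
  obtain x where x: "L = ereal x"
  proof (cases L)
    case (real x)
    then show ?thesis using that by blast
  next
    case PInf
    then show ?thesis using upper[of 1] by simp
  next
    case MInf
    then show ?thesis using lower[of 1] by simp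
  qed
  have "\<bar>c - x\<bar> \<le> W + e" if "0 < e" for e
    using lower[OF that] upper[OF that] unfolding x by (simp add: abs_le_iff)
  then have "\<bar>c - x\<bar> \<le> W"
    by (rule field_le_epsilon)
  then show ?thesis
    unfolding L_def[symmetric] x by simp
qed

lemma gain_error_le:
  assumes mdp: "is_mdp P" and pol: "is_policy pol" and fix_gain: "P_pi P pol g = g"
  shows "supnorm (\<lambda>s. g s - gain P r pol s) \<le> supnorm (\<lambda>s. T_pi P r pol V s - V s - g s)"
proof (rule supnorm_leI)
  fix s
  let ?M = "P_pi P pol"
  define w where "w x = T_pi P r pol V x - V x - g x" for x
  define W where "W = supnorm w"
  define C where "C = supnorm V"
  have V_bound: "\<bar>V x\<bar> \<le> C" and w_bound: "\<bar>w x\<bar> \<le> W" for x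
    unfolding C_def W_def by (rule abs_le_supnorm)+
  have avg_close: "\<bar>(1 / real T) * (\<Sum>t<T. (?M ^^ t) (r_pi r pol) s) - g s\<bar> \<le> W + 2 * C / real T"
    if "1 \<le> T" for T
  proof -
    define X where "X = V s - (?M ^^ T) V s + (\<Sum>t<T. (?M ^^ t) w s)"
    have "\<bar>V s - (?M ^^ T) V s\<bar> \<le> 2 * C"
      using P_pi_iterate_bounded[of P pol V C T s, OF mdp pol V_bound] V_bound[of s] by linarith
    moreover have "\<bar>\<Sum>t<T. (?M ^^ t) w s\<bar> \<le> real T * W"
      using order_trans[OF sum_abs sum_bounded_above[of "{..<T}" "\<lambda>t. \<bar>(?M ^^ t) w s\<bar>" W]]
        P_pi_iterate_bounded[of P pol w W, OF mdp pol w_bound] by simp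
    ultimately have X_bound: "\<bar>X\<bar> \<le> real T * W + 2 * C"
      unfolding X_def by linarith
    have "(\<Sum>t<T. (?M ^^ t) (r_pi r pol) s) = X + real T * g s"
      unfolding sum_P_pi_iterates_reward[OF fix_gain, where V = V] X_def w_def by simp
    then have "(1 / real T) * (\<Sum>t<T. (?M ^^ t) (r_pi r pol) s) - g s = X / real T"
      using that by (simp add: field_simps)
    also have "\<bar>X / real T\<bar> \<le> (real T * W + 2 * C) / real T"
      unfolding abs_divide using X_bound by (simp add: divide_right_mono)
    also have "\<dots> = W + 2 * C / real T"
      using that by (simp add: field_simps)
    finally show ?thesis .
  qed
  have "eventually (\<lambda>T. \<bar>(1 / real T) * (\<Sum>t<T. (?M ^^ t) (r_pi r pol) s) - g s\<bar> \<le> W + e)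
      sequentially" if "0 < e" for e
    using order_tendstoD(2)[OF lim_const_over_n[of "2 * C"] that] eventually_ge_at_top[of 1]
    by eventually_elim (use avg_close in fastforce)
  then have "\<bar>g s - gain P r pol s\<bar> \<le> W"
    unfolding gain_def by (rule abs_diff_real_liminf_le)
  then show "\<bar>g s - gain P r pol s\<bar> \<le> supnorm (\<lambda>s. T_pi P r pol V s - V s - g s)"
    unfolding W_def w_def .
qed

fun drift_coeff :: "(nat \<Rightarrow> real) \<Rightarrow> nat \<Rightarrow> real" where
  "drift_coeff lam 0 = 0"
| "drift_coeff lam (Suc n) = (1 - lam (Suc n)) * (drift_coeff lam n + 1)"

fun residual_coeff :: "(nat \<Rightarrow> real) \<Rightarrow> nat \<Rightarrow> real" where
  "residual_coeff lam 0 = 1"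
| "residual_coeff lam (Suc n) = (lam (Suc n))\<^sup>2 + (1 - lam (Suc n)) * residual_coeff lam n"

lemma drift_coeff_nonneg: "(\<And>n. lam n \<le> 1) \<Longrightarrow> 0 \<le> drift_coeff lam n"
  by (induction n) simp_all

lemma drift_coeff_le_Suc:
  assumes le_one: "\<And>n. lam n \<le> 1" and decreasing: "\<And>n. lam (Suc n) \<le> lam n"
  shows "drift_coeff lam n \<le> drift_coeff lam (Suc n)"
proof (induction n)
  case 0
  then show ?case using le_one[of "Suc 0"] by simp
next
  case (Suc n)
  have "(1 - lam (Suc n)) * (drift_coeff lam n + 1) \<le> (1 - lam (Suc n)) * (drift_coeff lam (Suc n) + 1)"
    using Suc.IH le_one[of "Suc n"] by (intro mult_left_mono) auto
  also have "\<dots> \<le> (1 - lam (Suc (Suc n))) * (drift_coeff lam (Suc n) + 1)"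
    using decreasing[of "Suc n"] drift_coeff_nonneg[of lam "Suc n", OF le_one]
    by (intro mult_right_mono) (simp_all del: drift_coeff.simps)
  finally show ?case by simp
qed

lemma drift_coeff_step_le_one:
  assumes "\<And>n. 0 \<le> lam n" "\<And>n. lam n \<le> 1"
  shows "drift_coeff lam (Suc n) - drift_coeff lam n \<le> 1"
  using assms(1)[of "Suc n"] mult_nonneg_nonneg[OF assms(1)[of "Suc n"] drift_coeff_nonneg[of lam, OF assms(2)]]
  by (simp add: algebra_simps)

lemma drift_coeff_unbounded:
  assumes le_one: "\<And>n. lam n \<le> 1" and decreasing: "\<And>n. lam (Suc n) \<le> lam n"
    and vanishing: "lam \<longlonglongrightarrow> 0"
  shows "\<exists>n. M < drift_coeff lam n"
proof (rule ccontr)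
  assume "\<nexists>n. M < drift_coeff lam n"
  then have bounded: "\<forall>n. drift_coeff lam n \<le> M"
    by (simp add: not_less)
  have "incseq (drift_coeff lam)"
    using drift_coeff_le_Suc[of lam, OF le_one decreasing] by (rule incseq_SucI)
  then obtain L where L: "drift_coeff lam \<longlonglongrightarrow> L"
    using incseq_convergent[OF _ bounded] by blast
  then have "(\<lambda>n. drift_coeff lam (Suc n)) \<longlonglongrightarrow> (1 - 0) * (L + 1)"
    unfolding drift_coeff.simps by (intro tendsto_intros LIMSEQ_Suc vanishing)
  with LIMSEQ_Suc[OF L] have "L = (1 - 0) * (L + 1)"
    by (rule LIMSEQ_unique)
  then show False by simp
qed

lemma residual_coeff_eq:
  "residual_coeff lam k = 1 - (\<Sum>i=1..k. lam i * (\<Prod>j=i..k. 1 - lam j))"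
proof (induction k)
  case 0
  then show ?case by simp
next
  case (Suc k)
  have sum_Suc: "(\<Sum>i=1..Suc k. lam i * (\<Prod>j=i..Suc k. 1 - lam j))
      = (\<Sum>i=1..k. lam i * (\<Prod>j=i..k. 1 - lam j)) * (1 - lam (Suc k)) + lam (Suc k) * (1 - lam (Suc k))"
    unfolding sum_distrib_right by (auto simp: prod.cl_ivl_Suc mult.assoc intro!: sum.cong)
  have "residual_coeff lam (Suc k)
      = 1 - ((1 - residual_coeff lam k) * (1 - lam (Suc k)) + lam (Suc k) * (1 - lam (Suc k)))"
    by (simp add: algebra_simps power2_eq_square)
  then show ?case
    using sum_Suc Suc.IH by simp
qed

locale anchored_value_iteration =
  fixes P :: "'s::finite \<Rightarrow> 'a::finite \<Rightarrow> 's \<Rightarrow> real"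
    and r :: "'s \<Rightarrow> 'a \<Rightarrow> real"
    and g h :: "'s \<Rightarrow> real"
    and lam :: "nat \<Rightarrow> real"
    and V :: "nat \<Rightarrow> 's \<Rightarrow> real"
    and pols :: "nat \<Rightarrow> 's \<Rightarrow> 'a \<Rightarrow> real"
  assumes mdp: "is_mdp P"
    and bell: "modified_bellman P r g h"
    and lam_nonneg: "0 \<le> lam n"
    and lam_le_one: "lam n \<le> 1"
    and lam_decreasing: "lam (Suc n) \<le> lam n"
    and V_Suc: "V (Suc n) s = lam (Suc n) * V 0 s + (1 - lam (Suc n)) * T_opt P r (V n) s"
    and policy: "is_policy (pols n)"
    and greedy: "T_pi P r (pols n) (V n) = T_opt P r (V n)"
begin

abbreviation "A n \<equiv> drift_coeff lam n"
abbreviation "TV n \<equiv> T_opt P r (V n)"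
abbreviation "R \<equiv> supnorm (\<lambda>s. V 0 s - h s)"
abbreviation "G \<equiv> supnorm g"

lemma drift_nonneg: "0 \<le> A n"
  using drift_coeff_nonneg[of lam, OF lam_le_one] .

lemma drift_step_nonneg: "0 \<le> A (Suc n) - A n"
  using drift_coeff_le_Suc[of lam, OF lam_le_one lam_decreasing] by simp

lemma drift_step_le_one: "A (Suc n) - A n \<le> 1"
  using drift_coeff_step_le_one[of lam, OF lam_nonneg lam_le_one] .

lemma value_near_bias: "\<bar>V n s - (h s + A n * g s)\<bar> \<le> R"
proof (induction n arbitrary: s)
  case 0
  then show ?case using abs_le_supnorm[of "\<lambda>s. V 0 s - h s"] by simp
next
  case (Suc n)
  have "V (Suc n) s - (h s + A (Suc n) * g s)
      = lam (Suc n) * (V 0 s - h s) + (1 - lam (Suc n)) * (TV n s - (h s + (A n + 1) * g s))"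
    by (simp add: V_Suc algebra_simps)
  moreover have "\<bar>TV n s - (h s + (A n + 1) * g s)\<bar> \<le> R"
    using T_opt_near_bias[OF mdp bell drift_nonneg Suc.IH] .
  ultimately show ?case
    using abs_le_supnorm[of "\<lambda>s. V 0 s - h s" s] lam_nonneg[of "Suc n"] lam_le_one[of "Suc n"]
    by (simp add: abs_convex_bound_le)
qed

lemma T_value_near_bias: "\<bar>TV n s - (h s + (A n + 1) * g s)\<bar> \<le> R"
  using T_opt_near_bias[OF mdp bell drift_nonneg value_near_bias] .

lemma anchor_gap_bound: "\<bar>TV n s - V 0 s - (A n + 1) * g s\<bar> \<le> 2 * R"
  using T_value_near_bias[of n s] abs_le_supnorm[of "\<lambda>s. V 0 s - h s" s]
  by (simp add: abs_le_iff)

lemma anchor_gap_lower: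
  assumes "\<gamma> s \<le> g s"
  shows "- 2 * R \<le> TV n s - V 0 s - (A n + 1) * \<gamma> s"
proof -
  have "(A n + 1) * \<gamma> s \<le> (A n + 1) * g s"
    using assms drift_nonneg[of n] by (intro mult_left_mono) auto
  then show ?thesis
    using anchor_gap_bound[of n s] by (simp add: abs_le_iff)
qed

definition increment :: "('s \<Rightarrow> real) \<Rightarrow> nat \<Rightarrow> 's \<Rightarrow> real" where
  "increment \<gamma> n s = V (Suc n) s - V n s - (A (Suc n) - A n) * \<gamma> s"

lemma increment_0: "increment \<gamma> 0 s = (1 - lam (Suc 0)) * (TV 0 s - V 0 s - \<gamma> s)"
  by (simp add: increment_def V_Suc algebra_simps)

lemma increment_Suc:
  "increment \<gamma> (Suc n) s
    = (lam (Suc n) - lam (Suc (Suc n))) * (TV (Suc n) s - V 0 s - (A (Suc n) + 1) * \<gamma> s)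
      + (1 - lam (Suc n)) * (TV (Suc n) s - TV n s - (A (Suc n) - A n) * \<gamma> s)"
  by (simp add: increment_def V_Suc algebra_simps)

lemma residual_Suc:
  "TV (Suc n) s - V (Suc n) s - g s
    = lam (Suc n) * (TV (Suc n) s - V 0 s - (A (Suc n) + 1) * g s)
      + (1 - lam (Suc n)) * (TV (Suc n) s - TV n s - (A (Suc n) - A n) * g s)"
  by (simp add: V_Suc algebra_simps)

lemma P_pi_increment:
  "P_pi P pol (increment \<gamma> n) s
    = P_pi P pol (\<lambda>x. V (Suc n) x - V n x) s - (A (Suc n) - A n) * P_pi P pol \<gamma> s"
proof -
  have "increment \<gamma> n = (\<lambda>x. V (Suc n) x - V n x - (A (Suc n) - A n) * \<gamma> x)"
    by (rule ext) (simp add: increment_def)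
  then show ?thesis
    using P_pi_diff_scale[of P pol "\<lambda>x. V (Suc n) x - V n x"] by simp
qed

lemma T_increment_le:
  "TV (Suc n) s - TV n s - (A (Suc n) - A n) * g s \<le> P_pi P (pols (Suc n)) (increment g n) s"
proof -
  have "(A (Suc n) - A n) * P_pi P (pols (Suc n)) g s \<le> (A (Suc n) - A n) * g s"
    using P_pi_gain_le[OF bell policy] drift_step_nonneg by (rule mult_left_mono)
  then show ?thesis
    using T_opt_diff_le_greedy[OF policy[of "Suc n"] greedy[of "Suc n"], where W = "V n" and s = s]
    unfolding P_pi_increment by linarith
qed

lemma T_increment_ge:
  assumes "\<gamma> s \<le> P_pi P (pols n) \<gamma> s"
  shows "P_pi P (pols n) (increment \<gamma> n) s \<le> TV (Suc n) s - TV n s - (A (Suc n) - A n) * \<gamma> s"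
proof -
  have "(A (Suc n) - A n) * \<gamma> s \<le> (A (Suc n) - A n) * P_pi P (pols n) \<gamma> s"
    using assms drift_step_nonneg by (rule mult_left_mono)
  then show ?thesis
    using greedy_le_T_opt_diff[OF policy[of n] greedy[of n], where V = "V (Suc n)" and s = s]
    unfolding P_pi_increment by linarith
qed

lemma increment_gain_upper: "increment g n s \<le> 2 * R * (residual_coeff lam n - lam (Suc n))"
proof (induction n arbitrary: s)
  case 0
  have "(1 - lam (Suc 0)) * (TV 0 s - V 0 s - g s) \<le> (1 - lam (Suc 0)) * (2 * R)"
    using anchor_gap_bound[of 0 s] lam_le_one by (intro mult_left_mono) (auto simp: abs_le_iff)
  then show ?case
    by (simp add: increment_0 algebra_simps)
next
  case (Suc n)
  have "TV (Suc n) s - TV n s - (A (Suc n) - A n) * g s \<le> 2 * R * (residual_coeff lam n - lam (Suc n))"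
    using T_increment_le P_pi_le[OF mdp policy Suc.IH] by (rule order_trans)
  then have "increment g (Suc n) s \<le> (lam (Suc n) - lam (Suc (Suc n))) * (2 * R)
      + (1 - lam (Suc n)) * (2 * R * (residual_coeff lam n - lam (Suc n)))"
    unfolding increment_Suc using anchor_gap_bound[of "Suc n" s] lam_decreasing lam_le_one
    by (intro add_mono mult_left_mono) (auto simp: abs_le_iff)
  also have "\<dots> = 2 * R * (residual_coeff lam (Suc n) - lam (Suc (Suc n)))"
    by (simp add: algebra_simps power2_eq_square)
  finally show ?case .
qed

lemma increment_lower:
  assumes below_gain: "\<And>s. \<gamma> s \<le> g s"
    and subharmonic: "\<And>k s. m \<le> k \<Longrightarrow> \<gamma> s \<le> P_pi P (pols k) \<gamma> s"
    and start: "\<And>s. - 2 * R * (residual_coeff lam m - lam (Suc m)) - e * (1 - lam m) \<le> increment \<gamma> m s"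
    and "m \<le> n"
  shows "- 2 * R * (residual_coeff lam n - lam (Suc n)) - e * (\<Prod>j=m..n. 1 - lam j) \<le> increment \<gamma> n s"
  using \<open>m \<le> n\<close>
proof (induction n arbitrary: s rule: dec_induct)
  case base
  then show ?case using start by simp
next
  case (step n)
  let ?bound = "- 2 * R * (residual_coeff lam n - lam (Suc n)) - e * (\<Prod>j=m..n. 1 - lam j)"
  have "?bound \<le> TV (Suc n) s - TV n s - (A (Suc n) - A n) * \<gamma> s"
    using P_pi_ge[OF mdp policy step.IH] T_increment_ge[OF subharmonic[OF step.hyps(1)]]
    by (rule order_trans)
  have "- 2 * R * (residual_coeff lam (Suc n) - lam (Suc (Suc n))) - e * (\<Prod>j=m..Suc n. 1 - lam j)
      = (lam (Suc n) - lam (Suc (Suc n))) * (- 2 * R) + (1 - lam (Suc n)) * ?bound"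
    using step.hyps(1) by (simp add: algebra_simps power2_eq_square)
  also have "\<dots> \<le> increment \<gamma> (Suc n) s"
    unfolding increment_Suc using anchor_gap_lower[of \<gamma> s "Suc n", OF below_gain] lam_decreasing lam_le_one
      \<open>?bound \<le> TV (Suc n) s - TV n s - (A (Suc n) - A n) * \<gamma> s\<close>
    by (intro add_mono mult_left_mono) auto
  finally show ?case .
qed

(* Every P^pi fixes the constant -G <= g, so comparing with it instead of g gives a lower bound
   that needs no information on the policies. *)
lemma T_increment_ge_crude:
  "- 2 * R * (residual_coeff lam n - lam (Suc n)) - 2 * G \<le> TV (Suc n) s - TV n s - (A (Suc n) - A n) * g s"
proof -
  have below_gain: "- G \<le> g s" for s
    using abs_le_supnorm[of g s] by simp
  have const_harmonic: "- G \<le> P_pi P (pols k) (\<lambda>_. - G) s" for k s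
    by (rule P_pi_ge[OF mdp policy]) simp
  have "(1 - lam (Suc 0)) * (- 2 * R) \<le> (1 - lam (Suc 0)) * (TV 0 s - V 0 s - (A 0 + 1) * - G)" for s
    using anchor_gap_lower[of "\<lambda>_. - G" s 0, OF below_gain] lam_le_one[of "Suc 0"]
    by (intro mult_left_mono) auto
  then have "- 2 * R * (residual_coeff lam 0 - lam (Suc 0)) - 0 * (1 - lam 0)
      \<le> increment (\<lambda>_. - G) 0 s" for s
    by (simp add: increment_0 algebra_simps)
  from increment_lower[of "\<lambda>_. - G" 0 0, OF below_gain const_harmonic this]
  have "- 2 * R * (residual_coeff lam n - lam (Suc n)) \<le> increment (\<lambda>_. - G) n s" for s
    by simp
  from order_trans[OF P_pi_ge[OF mdp policy this] T_increment_ge[OF const_harmonic]]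
  have "- 2 * R * (residual_coeff lam n - lam (Suc n)) \<le> TV (Suc n) s - TV n s + (A (Suc n) - A n) * G"
    by simp
  moreover have "(A (Suc n) - A n) * (G + g s) \<le> 1 * (2 * G)"
    using drift_step_nonneg drift_step_le_one below_gain[of s] abs_le_supnorm[of g s]
    by (intro mult_mono) (auto simp: abs_le_iff)
  ultimately show ?thesis
    by (simp add: algebra_simps)
qed

lemma increment_gain_lower:
  assumes preserving: "\<And>k. K \<le> k \<Longrightarrow> P_pi P (pols k) g = g" and "K \<le> n"
  shows "- 2 * R * (residual_coeff lam n - lam (Suc n)) - 2 * G * (\<Prod>j=K..n. 1 - lam j) \<le> increment g n s"
proof (rule increment_lower[OF order_refl _ _ \<open>K \<le> n\<close>])
  show "g s \<le> P_pi P (pols k) g s" if "K \<le> k" for k s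
    using preserving[OF that] by simp
  show "- 2 * R * (residual_coeff lam K - lam (Suc K)) - 2 * G * (1 - lam K) \<le> increment g K s" for s
  proof (cases K)
    case 0
    have "(1 - lam (Suc 0)) * (- 2 * R) \<le> (1 - lam (Suc 0)) * (TV 0 s - V 0 s - g s)"
      using anchor_gap_bound[of 0 s] lam_le_one[of "Suc 0"] by (intro mult_left_mono) (auto simp: abs_le_iff)
    moreover have "0 \<le> G * (1 - lam 0)"
      using abs_le_supnorm[of g s] lam_le_one[of 0] by simp
    ultimately show ?thesis
      using 0 by (simp add: increment_0 algebra_simps)
  next
    case (Suc m)
    have "- 2 * R * (residual_coeff lam (Suc m) - lam (Suc (Suc m))) - 2 * G * (1 - lam (Suc m))
        = (lam (Suc m) - lam (Suc (Suc m))) * (- 2 * R)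
          + (1 - lam (Suc m)) * (- 2 * R * (residual_coeff lam m - lam (Suc m)) - 2 * G)"
      by (simp add: algebra_simps power2_eq_square)
    also have "\<dots> \<le> increment g (Suc m) s"
      unfolding increment_Suc using anchor_gap_bound[of "Suc m" s] T_increment_ge_crude[of m s]
        lam_decreasing lam_le_one
      by (intro add_mono mult_left_mono) (auto simp: abs_le_iff)
    finally show ?thesis
      using Suc by simp
  qed
qed

lemma residual_upper: "TV (Suc n) s - V (Suc n) s - g s \<le> 2 * R * residual_coeff lam (Suc n)"
proof -
  have "TV (Suc n) s - TV n s - (A (Suc n) - A n) * g s \<le> 2 * R * (residual_coeff lam n - lam (Suc n))"
    using T_increment_le P_pi_le[OF mdp policy increment_gain_upper] by (rule order_trans)
  then have "TV (Suc n) s - V (Suc n) s - g s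
      \<le> lam (Suc n) * (2 * R) + (1 - lam (Suc n)) * (2 * R * (residual_coeff lam n - lam (Suc n)))"
    unfolding residual_Suc using anchor_gap_bound[of "Suc n" s] lam_nonneg lam_le_one
    by (intro add_mono mult_left_mono) (auto simp: abs_le_iff)
  also have "\<dots> = 2 * R * residual_coeff lam (Suc n)"
    by (simp add: algebra_simps power2_eq_square)
  finally show ?thesis .
qed

lemma residual_lower:
  assumes preserving: "\<And>k. K \<le> k \<Longrightarrow> P_pi P (pols k) g = g" and "K \<le> n"
  shows "- 2 * R * residual_coeff lam (Suc n) - 2 * G * (\<Prod>j=K..Suc n. 1 - lam j)
    \<le> TV (Suc n) s - V (Suc n) s - g s"
proof -
  let ?prod = "\<Prod>j=K..n. 1 - lam j"
  have "g s \<le> P_pi P (pols n) g s"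
    using preserving[OF \<open>K \<le> n\<close>] by simp
  from order_trans[OF P_pi_ge[OF mdp policy increment_gain_lower[OF preserving \<open>K \<le> n\<close>]]
      T_increment_ge[OF this]]
  have T_increment_lower: "- 2 * R * (residual_coeff lam n - lam (Suc n)) - 2 * G * ?prod
      \<le> TV (Suc n) s - TV n s - (A (Suc n) - A n) * g s" .
  have "- 2 * R * residual_coeff lam (Suc n) - 2 * G * (\<Prod>j=K..Suc n. 1 - lam j)
      = lam (Suc n) * (- 2 * R)
        + (1 - lam (Suc n)) * (- 2 * R * (residual_coeff lam n - lam (Suc n)) - 2 * G * ?prod)"
    using \<open>K \<le> n\<close> by (simp add: algebra_simps power2_eq_square)
  also have "\<dots> \<le> TV (Suc n) s - V (Suc n) s - g s"
    unfolding residual_Suc using anchor_gap_bound[of "Suc n" s] lam_nonneg lam_le_one T_increment_lower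
    by (intro add_mono mult_left_mono) (auto simp: abs_le_iff)
  finally show ?thesis .
qed

lemma residual_bound:
  assumes preserving: "\<And>k. K \<le> k \<Longrightarrow> P_pi P (pols k) g = g" and "K < k"
  shows "\<bar>TV k s - V k s - g s\<bar> \<le> 2 * residual_coeff lam k * R + 2 * (\<Prod>j=K..k. 1 - lam j) * G"
proof -
  obtain n where k: "k = Suc n" and "K \<le> n"
    using \<open>K < k\<close> by (cases k) auto
  have "0 \<le> G * (\<Prod>j=K..Suc n. 1 - lam j)"
    using abs_le_supnorm[of g s] lam_le_one by (intro mult_nonneg_nonneg prod_nonneg) auto
  then show ?thesis
    using residual_upper[of n s] residual_lower[OF preserving \<open>K \<le> n\<close>, of s]
    unfolding k by (simp add: abs_le_iff algebra_simps)
qed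

lemma eventually_preserves_gain:
  assumes "lam \<longlonglongrightarrow> 0"
  shows "\<exists>K. \<forall>k\<ge>K. P_pi P (pols k) g = g"
proof -
  let ?Pg = "\<lambda>s a. \<Sum>s'\<in>UNIV. P s a s' * g s'"
  define \<epsilon> where "\<epsilon> = Min (insert 1 ((\<lambda>(s, a). g s - ?Pg s a) ` {(s, a). ?Pg s a < g s}))"
  have "0 < \<epsilon>"
    unfolding \<epsilon>_def by (subst Min_gr_iff) auto
  have \<epsilon>_le: "\<epsilon> \<le> g s - ?Pg s a" if "?Pg s a < g s" for s a
    unfolding \<epsilon>_def using that by (intro Min_le) auto
  obtain N where N: "2 * R / \<epsilon> < A N"
    using drift_coeff_unbounded[of lam, OF lam_le_one lam_decreasing assms] by blast
  have "P_pi P (pols k) g = g" if "N \<le> k" for k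
  proof (rule greedy_policy_preserves_gain[OF mdp bell policy greedy value_near_bias])
    fix s a
    assume "?Pg s a < g s"
    have "2 * R < A N * \<epsilon>"
      using N \<open>0 < \<epsilon>\<close> by (simp add: pos_divide_less_eq)
    also have "\<dots> \<le> A k * (g s - ?Pg s a)"
      using drift_coeff_le_Suc[of lam, OF lam_le_one lam_decreasing] \<open>N \<le> k\<close> \<open>0 < \<epsilon>\<close>
        \<epsilon>_le[OF \<open>?Pg s a < g s\<close>] drift_nonneg[of k]
      by (intro mult_mono) (auto intro: lift_Suc_mono_le)
    finally show "2 * R < A k * (g s - ?Pg s a)" .
  qed
  then show ?thesis by blast
qed

end

theorem theorem10:
  fixes P :: "'s::finite \<Rightarrow> 'a::finite \<Rightarrow> 's \<Rightarrow> real"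
    and r :: "'s \<Rightarrow> 'a \<Rightarrow> real"
    and g h V0 :: "'s \<Rightarrow> real"
    and lam :: "nat \<Rightarrow> real"
    and V :: "nat \<Rightarrow> 's \<Rightarrow> real"
    and pols :: "nat \<Rightarrow> 's \<Rightarrow> 'a \<Rightarrow> real"
  assumes mdp: "is_mdp P"
    and bell: "modified_bellman P r g h"
    and lam0: "lam 0 = 1"
    and lam_mono: "\<And>k. k \<ge> 1 \<Longrightarrow> lam (Suc k) \<le> lam k"
    and lam_lt1: "\<And>k. k \<ge> 1 \<Longrightarrow> lam k < 1"
    and lam_lim: "lam \<longlonglongrightarrow> 0"
    and V0: "V 0 = V0"
    and Vrec: "\<And>k. k \<ge> 1 \<Longrightarrow> V k = (\<lambda>s. lam k * V0 s + (1 - lam k) * T_opt P r (V (k - 1)) s)"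
    and pol_ok: "\<And>k. is_policy (pols k)"
    and greedy: "\<And>k. T_pi P r (pols k) (V k) = T_opt P r (V k)"
  shows "(\<exists>K::nat. \<forall>k\<ge>K. P_pi P (pols k) g = g) \<and>
         (let K = (LEAST K::nat. \<forall>k\<ge>K. P_pi P (pols k) g = g) in
          \<forall>k>K.
            supnorm (\<lambda>s. g s - gain P r (pols k) s)
              \<le> supnorm (\<lambda>s. T_opt P r (V k) s - V k s - g s) \<and>
            supnorm (\<lambda>s. T_opt P r (V k) s - V k s - g s)
              \<le> 2 * (1 - (\<Sum>i=1..k. lam i * (\<Prod>j=i..k. (1 - lam j)))) * supnorm (\<lambda>s. V0 s - h s)
                + 2 * (\<Prod>j=K..k. (1 - lam j)) * supnorm g)"
proof -
  have lam_le_one: "lam n \<le> 1" for n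
    using lam0 lam_lt1[of n] by (cases n) auto
  have lam_decreasing: "lam (Suc n) \<le> lam n" for n
    using lam0 lam_lt1[of 1] lam_mono[of n] by (cases n) auto
  have lam_nonneg: "0 \<le> lam n" for n
    using decseq_ge[OF decseq_SucI lam_lim] lam_decreasing by blast
  interpret anchored_value_iteration P r g h lam V pols
    using mdp bell lam_nonneg lam_le_one lam_decreasing pol_ok greedy Vrec[of "Suc _"]
    by unfold_locales (simp_all add: V0)
  let ?preserving = "\<lambda>K. \<forall>k\<ge>K. P_pi P (pols k) g = g"
  define K where "K = (LEAST K. ?preserving K)"
  have ex: "\<exists>K. ?preserving K"
    using eventually_preserves_gain[OF lam_lim] .
  then have preserving: "P_pi P (pols k) g = g" if "K \<le> k" for k
    using LeastI_ex[of ?preserving] that unfolding K_def by blast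
  have "supnorm (\<lambda>s. g s - gain P r (pols k) s) \<le> supnorm (\<lambda>s. T_opt P r (V k) s - V k s - g s)"
    if "K < k" for k
    using gain_error_le[OF mdp pol_ok preserving, of k r "V k"] greedy[of k] that by simp
  moreover have "supnorm (\<lambda>s. T_opt P r (V k) s - V k s - g s)
      \<le> 2 * (1 - (\<Sum>i=1..k. lam i * (\<Prod>j=i..k. 1 - lam j))) * supnorm (\<lambda>s. V0 s - h s)
        + 2 * (\<Prod>j=K..k. 1 - lam j) * supnorm g" if "K < k" for k
    using residual_bound[OF preserving that] by (intro supnorm_leI) (simp add: residual_coeff_eq V0)
  ultimately show ?thesis
    using ex unfolding K_def Let_def by blast
qed

end
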